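(* Under Assumption 1, let $c:[0,\infty)\to(0,\infty)$ and $s:[0,\infty)\to[0,\infty)$ be continuously differentiable, with $c(0)=c_0$ and $s(0)=s_0$, and let $\tilde\Phi$, $\tilde{\mathcal{D}}(t)$ and $\tilde{\mathbf{z}}^\star(t)=\arg\min_{\mathbf{x}\in\tilde{\mathcal{D}}(t)}\tilde\Phi(\mathbf{x},t)$ be as defined below. Let $\mathbf{x}_0\in\mathbb{R}^n$ be arbitrary and $$s_0=\begin{cases}0 & \text{if } \max_i f_i(\mathbf{x}_0,0)\le 0,\\ \max_i f_i(\mathbf{x}_0,0)+\varepsilon & \text{if } \max_i f_i(\mathbf{x}_0,0)>0,\end{cases}$$ for some $\varepsilon>0$. Let $\mathbf{P}\in\mathbb{S}^n_{++}$ with $\mathbf{P}\succeq\sigma\mathbf{I}_n$, $\sigma>0$, and let $\tilde{\mathbf{z}}(t)$ solve $$\dot{\tilde{\mathbf{z}}}(t)=-\nabla_{\mathbf{x}\mathbf{x}}\tilde\Phi(\tilde{\mathbf{z}}(t),t)^{-1}\big(\mathbf{P}\nabla_{\mathbf{x}}\tilde\Phi(\tilde{\mathbf{z}}(t),t)+\nabla_{\mathbf{x}t}\tilde\Phi(\tilde{\mathbf{z}}(t),t)\big),\qquad\tilde{\mathbf{z}}(0)=\mathbf{x}_0,$$ with $\tilde{\mathbf{z}}(t)\in\tilde{\mathcal{D}}(t)$ for all $t\ge0$. Then there is $0\le C(\mathbf{x}_0,c_0,s_0,m)<\infty$ such that $$\|\tilde{\mathbf{z}}(t)-\tilde{\mathbf{z}}^\star(t)\|_2\le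 C(\mathbf{x}_0,c_0,s_0,m)\,e^{-\sigma t}\quad\text{for all }t\ge0.$$
   Context: Assumption 1: $f_0(\mathbf{x},t)$ and $f_i(\mathbf{x},t)$, $i=1,\dots,p$, are twice continuously differentiable in $\mathbf{x}$ and continuously differentiable in $t$ for $t\ge0$; $\nabla_{\mathbf{x}\mathbf{x}} f_0(\mathbf{x},t)\succeq m\mathbf{I}$ for some $m>0$; each $f_i(\cdot,t)$ is convex for all $t\ge0$. Perturbed barrier: $\tilde\Phi(\mathbf{x},t)=f_0(\mathbf{x},t)-\frac{1}{c(t)}\sum_{i=1}^p\log(s(t)-f_i(\mathbf{x},t))$ on $\tilde{\mathcal{D}}(t)=\{\mathbf{x}: f_i(\mathbf{x},t)<s(t),\ i=1,\dots,p\}$. $\nabla_{\mathbf{x}}$, $\nabla_{\mathbf{x}\mathbf{x}}$ denote gradient and Hessian in $\mathbf{x}$; $\nabla_{\mathbf{x}t}\tilde\Phi$ is the partial time derivative of $\nabla_{\mathbf{x}}\tilde\Phi$. *)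

theory Defs
  imports "HOL-Analysis.Analysis"
begin

definition xgrad :: "(real^'n \<Rightarrow> real) \<Rightarrow> real^'n \<Rightarrow> real^'n" where
  "xgrad g x = (\<chi> i. frechet_derivative g (at x) (axis i 1))"

definition xhess :: "(real^'n \<Rightarrow> real) \<Rightarrow> real^'n \<Rightarrow> real^'n^'n" where
  "xhess g x = (\<chi> i j. frechet_derivative (\<lambda>y. xgrad g y $ i) (at x) (axis j 1))"

definition grad_xt :: "(real^'n \<Rightarrow> real \<Rightarrow> real) \<Rightarrow> real^'n \<Rightarrow> real \<Rightarrow> real^'n" where
  "grad_xt F x t = vector_derivative (\<lambda>\<tau>. xgrad (\<lambda>y. F y \<tau>) x) (at t within {0..})"

definition tderiv :: "(real^'n \<Rightarrow> real \<Rightarrow> real) \<Rightarrow> real^'n \<Rightarrow> real \<Rightarrow> real" where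
  "tderiv F x t = vector_derivative (\<lambda>\<tau>. F x \<tau>) (at t within {0..})"

text \<open>Smoothness part of Assumption 1: twice continuously differentiable in x, continuously
  differentiable in t (t \<ge> 0), with all the partial derivatives involved (including the mixed
  derivative of the gradient, which the ODE uses) existing and jointly continuous in (x,t).\<close>
definition tv_smooth :: "(real^'n \<Rightarrow> real \<Rightarrow> real) \<Rightarrow> bool" where
  "tv_smooth F \<longleftrightarrow>
     (\<forall>t\<ge>0. \<forall>x. (\<lambda>y. F y t) differentiable (at x)) \<and>
     (\<forall>t\<ge>0. \<forall>x. (\<lambda>y. xgrad (\<lambda>z. F z t) y) differentiable (at x)) \<and>
     (\<forall>x. \<forall>t\<ge>0. (\<lambda>\<tau>. F x \<tau>) differentiable (at t within {0..})) \<and>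
     (\<forall>x. \<forall>t\<ge>0. (\<lambda>\<tau>. xgrad (\<lambda>y. F y \<tau>) x) differentiable (at t within {0..})) \<and>
     continuous_on (UNIV \<times> {0..}) (\<lambda>xt. F (fst xt) (snd xt)) \<and>
     continuous_on (UNIV \<times> {0..}) (\<lambda>xt. xgrad (\<lambda>y. F y (snd xt)) (fst xt)) \<and>
     continuous_on (UNIV \<times> {0..}) (\<lambda>xt. xhess (\<lambda>y. F y (snd xt)) (fst xt)) \<and>
     continuous_on (UNIV \<times> {0..}) (\<lambda>xt. tderiv F (fst xt) (snd xt)) \<and>
     continuous_on (UNIV \<times> {0..}) (\<lambda>xt. grad_xt F (fst xt) (snd xt))"

definition Phi_tilde ::
  "(real^'n \<Rightarrow> real \<Rightarrow> real) \<Rightarrow> (nat \<Rightarrow> real^'n \<Rightarrow> real \<Rightarrow> real) \<Rightarrow> nat \<Rightarrow>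
   (real \<Rightarrow> real) \<Rightarrow> (real \<Rightarrow> real) \<Rightarrow> real^'n \<Rightarrow> real \<Rightarrow> real" where
  "Phi_tilde f0 f p c s x t = f0 x t - (1 / c t) * (\<Sum>i=1..p. ln (s t - f i x t))"

definition D_tilde ::
  "(nat \<Rightarrow> real^'n \<Rightarrow> real \<Rightarrow> real) \<Rightarrow> nat \<Rightarrow> (real \<Rightarrow> real) \<Rightarrow> real \<Rightarrow> (real^'n) set" where
  "D_tilde f p s t = {x. \<forall>i\<in>{1..p}. f i x t < s t}"

definition z_star ::
  "(real^'n \<Rightarrow> real \<Rightarrow> real) \<Rightarrow> (nat \<Rightarrow> real^'n \<Rightarrow> real \<Rightarrow> real) \<Rightarrow> nat \<Rightarrow>
   (real \<Rightarrow> real) \<Rightarrow> (real \<Rightarrow> real) \<Rightarrow> real \<Rightarrow> real^'n" where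
  "z_star f0 f p c s t = arg_min_on (\<lambda>x. Phi_tilde f0 f p c s x t) (D_tilde f p s t)"

end

theory Submission
  imports Defs
begin

text \<open>Write \<open>g(t) = \<nabla>\<^sub>x \<Phi>(z(t), t)\<close>. By the chain rule and the flow equation,
  \<open>\<dot>g = \<nabla>\<^sub>x\<^sub>x\<Phi> \<dot>z + \<nabla>\<^sub>x\<^sub>t\<Phi> = -P g\<close>, so \<open>P \<succeq> \<sigma> I\<close> gives \<open>\<parallel>g(t)\<parallel> \<le> \<parallel>g(0)\<parallel> e\<^sup>-\<^sup>\<sigma>\<^sup>t\<close>.
  On the other hand \<open>\<Phi>(\<cdot>, t)\<close> is \<open>m\<close>-strongly convex on the convex open set \<open>\<D>(t)\<close>, because
  \<open>f\<^sub>0\<close> is and each \<open>-log(s - f\<^sub>i)\<close> is convex. It is coercive and blows up at the boundary,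
  so it has a minimiser \<open>z\<^sup>\<star>(t)\<close>, where the gradient vanishes; strong monotonicity of the
  gradient then gives \<open>m \<parallel>x - z\<^sup>\<star>(t)\<parallel> \<le> \<parallel>\<nabla>\<^sub>x \<Phi>(x, t)\<parallel>\<close>. Hence
  \<open>C = \<parallel>g(0)\<parallel> / m\<close> works.\<close>

lemma linear_eq_sum_axis:
  fixes L :: "real^'n \<Rightarrow> 'b::real_vector"
  assumes "linear L"
  shows "L v = (\<Sum>j\<in>UNIV. v$j *\<^sub>R L (axis j 1))"
proof -
  have "L v = L (\<Sum>j\<in>UNIV. (v$j) *s axis j 1)" by (simp add: basis_expansion)
  also have "\<dots> = (\<Sum>j\<in>UNIV. v$j *\<^sub>R L (axis j 1))"
    using assms by (simp add: linear_sum linear_scale scalar_mult_eq_scaleR)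
  finally show ?thesis .
qed

lemma xgrad_eq:
  assumes "(g has_derivative g') (at x)"
  shows "xgrad g x = (\<chi> i. g' (axis i 1))"
  using frechet_derivative_at[OF assms] by (simp add: xgrad_def)

lemma xgrad_inner_eq:
  assumes "(g has_derivative g') (at x)"
  shows "xgrad g x \<bullet> v = g' v"
  unfolding xgrad_eq[OF assms] linear_eq_sum_axis[OF has_derivative_linear[OF assms], of v]
  by (simp add: inner_vec_def mult.commute)

lemma xhess_mult_eq:
  assumes "(xgrad g has_derivative L) (at x)"
  shows "xhess g x *v v = L v"
proof -
  have "frechet_derivative (\<lambda>y. xgrad g y $ i) (at x) = (\<lambda>v. L v $ i)" for i
    using bounded_linear.has_derivative[OF bounded_linear_vec_nth assms]
    by (rule frechet_derivative_at[symmetric])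
  then have "xhess g x = (\<chi> i j. L (axis j 1) $ i)"
    by (simp add: xhess_def)
  then show ?thesis
    by (simp add: matrix_vector_mult_def vec_eq_iff mult.commute
        linear_eq_sum_axis[OF has_derivative_linear[OF assms], of v])
qed

lemma tv_smooth_has_derivative_xgrad:
  assumes "tv_smooth F" "t \<ge> 0"
  shows "((\<lambda>y. F y t) has_derivative (\<lambda>h. xgrad (\<lambda>y. F y t) x \<bullet> h)) (at x)"
proof -
  obtain A where A: "((\<lambda>y. F y t) has_derivative A) (at x)"
    using assms unfolding tv_smooth_def differentiable_def by blast
  then show ?thesis using xgrad_inner_eq[OF A] by (simp add: fun_eq_iff)
qed

lemma tv_smooth_xgrad_has_derivative_xhess:
  assumes "tv_smooth F" "t \<ge> 0"
  shows "(xgrad (\<lambda>y. F y t) has_derivative (\<lambda>h. xhess (\<lambda>y. F y t) x *v h)) (at x)"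
proof -
  obtain A where A: "(xgrad (\<lambda>y. F y t) has_derivative A) (at x)"
    using assms unfolding tv_smooth_def differentiable_def by blast
  then show ?thesis using xhess_mult_eq[OF A] by (simp add: fun_eq_iff)
qed

lemma has_derivative_space_time:
  fixes g :: "'a::real_normed_vector \<Rightarrow> real \<Rightarrow> 'b::real_normed_vector"
  assumes gx: "((\<lambda>y. g y t) has_derivative A) (at x)"
    and gt: "\<And>y \<tau>. \<tau> \<ge> 0 \<Longrightarrow> ((\<lambda>\<tau>. g y \<tau>) has_vector_derivative D y \<tau>) (at \<tau> within {0..})"
    and D: "continuous_on (UNIV \<times> {0..}) (\<lambda>w. D (fst w) (snd w))"
    and t: "t \<ge> 0"
  shows "((\<lambda>w. g (fst w) (snd w)) has_derivative (\<lambda>w. A (fst w) + snd w *\<^sub>R D x t))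
           (at (x, t) within UNIV \<times> {0..})"
proof -
  have "continuous_on (UNIV \<times> {0..}) (blinfun_scaleR_left \<circ> (\<lambda>w. D (fst w) (snd w)))"
    by (intro continuous_on_compose D linear_continuous_on bounded_linear_blinfun_scaleR_left)
  then have "continuous (at (x, t) within UNIV \<times> {0..}) (\<lambda>(y, \<tau>). blinfun_scaleR_left (D y \<tau>))"
    using t by (simp add: continuous_on_eq_continuous_within split_beta' o_def)
  then have "((\<lambda>(y, \<tau>). g y \<tau>) has_derivative
      (\<lambda>(h, k). A h + blinfun_scaleR_left (D x t) k)) (at (x, t) within UNIV \<times> {0..})"
    using gx gt t by (intro has_derivative_partialsI) (auto simp: has_vector_derivative_def)
  then show ?thesis by (simp add: split_beta')
qed

lemma tv_smooth_has_derivative_space_time: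
  assumes F: "tv_smooth F" and t: "t \<ge> 0"
  shows "((\<lambda>w. F (fst w) (snd w)) has_derivative
           (\<lambda>w. xgrad (\<lambda>y. F y t) x \<bullet> fst w + snd w * tderiv F x t)) (at (x, t) within UNIV \<times> {0..})"
    and "((\<lambda>w. xgrad (\<lambda>y. F y (snd w)) (fst w)) has_derivative
           (\<lambda>w. xhess (\<lambda>y. F y t) x *v fst w + snd w *\<^sub>R grad_xt F x t)) (at (x, t) within UNIV \<times> {0..})"
proof -
  have Ft: "\<And>y \<tau>. \<tau> \<ge> 0 \<Longrightarrow> ((\<lambda>\<tau>. F y \<tau>) has_vector_derivative tderiv F y \<tau>) (at \<tau> within {0..})"
    and gt: "\<And>y \<tau>. \<tau> \<ge> 0 \<Longrightarrow>
      ((\<lambda>\<tau>. xgrad (\<lambda>z. F z \<tau>) y) has_vector_derivative grad_xt F y \<tau>) (at \<tau> within {0..})"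
    using F unfolding tv_smooth_def tderiv_def grad_xt_def
    by (auto simp: vector_derivative_works[symmetric])
  show "((\<lambda>w. F (fst w) (snd w)) has_derivative
           (\<lambda>w. xgrad (\<lambda>y. F y t) x \<bullet> fst w + snd w * tderiv F x t)) (at (x, t) within UNIV \<times> {0..})"
    using has_derivative_space_time[OF tv_smooth_has_derivative_xgrad[OF F t] Ft _ t] F
    by (simp add: tv_smooth_def)
  show "((\<lambda>w. xgrad (\<lambda>y. F y (snd w)) (fst w)) has_derivative
           (\<lambda>w. xhess (\<lambda>y. F y t) x *v fst w + snd w *\<^sub>R grad_xt F x t)) (at (x, t) within UNIV \<times> {0..})"
    using has_derivative_space_time[where g="\<lambda>y \<tau>. xgrad (\<lambda>z. F z \<tau>) y",
        OF tv_smooth_xgrad_has_derivative_xhess[OF F t] gt _ t] F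
    by (simp add: tv_smooth_def)
qed

lemma differentiable_time_only:
  assumes "g differentiable (at t within {0..})"
  shows "(\<lambda>w. g (snd w)) differentiable (at (x, t) within UNIV \<times> {0..})"
proof -
  obtain D where "(g has_derivative D) (at (snd (x, t)) within snd ` (UNIV \<times> {0..}))"
    using assms by (auto simp: differentiable_def)
  moreover have "(snd has_derivative snd) (at (x, t) within UNIV \<times> {0..})"
    by (simp add: bounded_linear_snd bounded_linear_imp_has_derivative)
  ultimately show ?thesis
    using has_derivative_in_compose[of snd snd "(x, t)" "UNIV \<times> {0..}" g D]
    by (auto simp: differentiable_def o_def)
qed

lemma at_within_atLeast_neq_bot: "(t::real) \<ge> 0 \<Longrightarrow> at t within {0..} \<noteq> bot"
  using at_le[of "{t..}" "{0..}" t] at_within_Ici_at_right[of t] trivial_limit_at_right_real[of t]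
  by (auto simp: bot_unique)

lemma has_real_derivative_along_line:
  fixes g :: "'a::real_inner \<Rightarrow> real"
  assumes "(g has_derivative (\<lambda>h. G \<bullet> h)) (at (x + r *\<^sub>R v))"
  shows "((\<lambda>r. g (x + r *\<^sub>R v)) has_real_derivative (G \<bullet> v)) (at r)"
proof -
  have "((\<lambda>r. x + r *\<^sub>R v) has_derivative (\<lambda>k. k *\<^sub>R v)) (at r)"
    by (auto intro!: derivative_eq_intros)
  from has_derivative_compose[OF this assms] show ?thesis
    unfolding has_field_derivative_def
    by (rule has_derivative_eq_rhs) (simp add: fun_eq_iff mult.commute)
qed

lemma has_real_derivative_inner_along_line:
  fixes G :: "'a::real_inner \<Rightarrow> 'a"
  assumes "(G has_derivative L) (at (x + r *\<^sub>R v))"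
  shows "((\<lambda>r. G (x + r *\<^sub>R v) \<bullet> w) has_real_derivative (L v \<bullet> w)) (at r)"
proof -
  have "((\<lambda>r. x + r *\<^sub>R v) has_derivative (\<lambda>k. k *\<^sub>R v)) (at r)"
    by (auto intro!: derivative_eq_intros)
  from has_derivative_compose[OF this assms]
  have "((\<lambda>r. G (x + r *\<^sub>R v) \<bullet> w) has_derivative (\<lambda>k. L (k *\<^sub>R v) \<bullet> w)) (at r)"
    by (auto intro!: derivative_eq_intros)
  then show ?thesis
    unfolding has_field_derivative_def
    by (rule has_derivative_eq_rhs)
      (simp add: fun_eq_iff linear_scale[OF has_derivative_linear[OF assms]] mult.commute)
qed

lemma convex_on_along_line:
  assumes "convex_on UNIV g"
  shows "convex_on UNIV (\<lambda>r. g (x + r *\<^sub>R v))"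
proof (rule convex_onI)
  fix u a b :: real assume u: "0 < u" "u < 1"
  have "x + ((1 - u) *\<^sub>R a + u *\<^sub>R b) *\<^sub>R v = (1 - u) *\<^sub>R (x + a *\<^sub>R v) + u *\<^sub>R (x + b *\<^sub>R v)"
    by (simp add: algebra_simps)
  then show "g (x + ((1 - u) *\<^sub>R a + u *\<^sub>R b) *\<^sub>R v) \<le> (1 - u) * g (x + a *\<^sub>R v) + u * g (x + b *\<^sub>R v)"
    using convex_onD[OF assms, of u] u by simp
qed auto

lemma convex_above_tangent_along_line:
  fixes g :: "'a::real_inner \<Rightarrow> real"
  assumes g: "convex_on UNIV g" and G: "\<And>y. (g has_derivative (\<lambda>h. G y \<bullet> h)) (at y)"
  shows "g (x + a *\<^sub>R v) + G (x + a *\<^sub>R v) \<bullet> v * (b - a) \<le> g (x + b *\<^sub>R v)"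
proof -
  have "G (x + a *\<^sub>R v) \<bullet> v * (b - a) \<le> g (x + b *\<^sub>R v) - g (x + a *\<^sub>R v)"
    by (rule convex_on_imp_above_tangent[OF convex_on_along_line[OF g]])
      (auto intro: has_real_derivative_along_line[OF G])
  then show ?thesis by simp
qed

lemma convex_above_tangent:
  fixes g :: "'a::real_inner \<Rightarrow> real"
  assumes "convex_on UNIV g" and "\<And>y. (g has_derivative (\<lambda>h. G y \<bullet> h)) (at y)"
  shows "g x + G x \<bullet> (y - x) \<le> g y"
  using convex_above_tangent_along_line[OF assms, of x 0 "y - x" 1] by simp

text \<open>Negative curvature in direction \<open>v\<close> would make the slope along \<open>v\<close> decrease,
  contradicting the tangent inequality applied at both ends of a short segment.\<close>
lemma convex_hessian_nonneg:
  fixes g :: "'a::real_inner \<Rightarrow> real"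
  assumes g: "convex_on UNIV g" and G: "\<And>y. (g has_derivative (\<lambda>h. G y \<bullet> h)) (at y)"
    and L: "(G has_derivative L) (at x)"
  shows "0 \<le> L v \<bullet> v"
proof (rule ccontr)
  assume neg: "\<not> 0 \<le> L v \<bullet> v"
  have "((\<lambda>r. G (x + r *\<^sub>R v) \<bullet> v) has_real_derivative (L v \<bullet> v)) (at 0)"
    using has_real_derivative_inner_along_line[of G L x 0 v v] L by simp
  moreover have "L v \<bullet> v < 0" using neg by simp
  ultimately obtain e where e: "e > 0"
    and dec: "\<forall>h>0. h < e \<longrightarrow> G (x + (0 + h) *\<^sub>R v) \<bullet> v < G (x + 0 *\<^sub>R v) \<bullet> v"
    by (blast dest: DERIV_neg_dec_right)
  have "g x + G x \<bullet> v * (e / 2) \<le> g (x + (e / 2) *\<^sub>R v)"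
    using convex_above_tangent_along_line[OF g G, of x 0 v "e / 2"] by simp
  moreover have "g (x + (e / 2) *\<^sub>R v) - G (x + (e / 2) *\<^sub>R v) \<bullet> v * (e / 2) \<le> g x"
    using convex_above_tangent_along_line[OF g G, of x "e / 2" v 0] by simp
  moreover have "G (x + (e / 2) *\<^sub>R v) \<bullet> v * (e / 2) < G x \<bullet> v * (e / 2)"
    using dec e by simp
  ultimately show False by linarith
qed

lemma strongly_convex_above_tangent:
  fixes g :: "'a::real_inner \<Rightarrow> real"
  assumes G: "\<And>y. (g has_derivative (\<lambda>h. G y \<bullet> h)) (at y)"
    and L: "\<And>y. (G has_derivative L y) (at y)"
    and m: "\<And>y. m * (norm v)\<^sup>2 \<le> L y v \<bullet> v"
  shows "g x + G x \<bullet> v + m / 2 * (norm v)\<^sup>2 \<le> g (x + v)"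
proof -
  define \<psi> where "\<psi> r = G (x + r *\<^sub>R v) \<bullet> v - G x \<bullet> v - m * (norm v)\<^sup>2 * r" for r
  define \<phi> where "\<phi> r = g (x + r *\<^sub>R v) - (G x \<bullet> v) * r - (m / 2 * (norm v)\<^sup>2) * r\<^sup>2" for r
  have "\<psi> 0 \<le> \<psi> r" if "0 \<le> r" for r
  proof (rule DERIV_nonneg_imp_nondecreasing[OF that])
    fix y
    have "(\<psi> has_real_derivative L (x + y *\<^sub>R v) v \<bullet> v - 0 - m * (norm v)\<^sup>2 * 1) (at y)"
      unfolding \<psi>_def
      by (intro DERIV_diff DERIV_const DERIV_cmult DERIV_ident has_real_derivative_inner_along_line L)
    then show "\<exists>l. (\<psi> has_real_derivative l) (at y) \<and> 0 \<le> l"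
      using m[of "x + y *\<^sub>R v"] by force
  qed
  then have \<psi>_nonneg: "0 \<le> \<psi> r" if "0 \<le> r" for r
    using that by (simp add: \<psi>_def)
  have "(\<phi> has_real_derivative G (x + r *\<^sub>R v) \<bullet> v - (G x \<bullet> v) * 1 - (m / 2 * (norm v)\<^sup>2) * (2 * r)) (at r)" for r
  proof -
    have "((\<lambda>r. r\<^sup>2) has_real_derivative 2 * r) (at r)"
      using DERIV_pow[of 2 r] by simp
    then show ?thesis
      unfolding \<phi>_def
      by (intro DERIV_diff DERIV_cmult DERIV_ident has_real_derivative_along_line G)
  qed
  then have \<phi>': "(\<phi> has_real_derivative \<psi> r) (at r)" for r
    by (simp add: \<psi>_def mult.assoc)
  have "\<phi> 0 \<le> \<phi> 1"
  proof (rule DERIV_nonneg_imp_nondecreasing[of 0 1])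
    show "\<exists>l. (\<phi> has_real_derivative l) (at r) \<and> 0 \<le> l" if "0 \<le> r" for r
      using \<phi>' \<psi>_nonneg[OF that] by blast
  qed simp
  then show ?thesis by (simp add: \<phi>_def)
qed

lemma strongly_monotone_on_convex:
  fixes G :: "'a::real_inner \<Rightarrow> 'a"
  assumes D: "convex D" "x \<in> D" "y \<in> D"
    and G: "\<And>u. u \<in> D \<Longrightarrow> (G has_derivative H u) (at u)"
    and H: "\<And>u. u \<in> D \<Longrightarrow> m * (norm (x - y))\<^sup>2 \<le> H u (x - y) \<bullet> (x - y)"
  shows "m * (norm (x - y))\<^sup>2 \<le> (G x - G y) \<bullet> (x - y)"
proof -
  define d where "d = x - y"
  have on_segment: "y + r *\<^sub>R d \<in> D" if "0 \<le> r" "r \<le> 1" for r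
  proof -
    have "y + r *\<^sub>R d = (1 - r) *\<^sub>R y + r *\<^sub>R x" by (simp add: d_def algebra_simps)
    then show ?thesis using convexD[OF D(1) D(3) D(2), of "1 - r" r] that by simp
  qed
  define \<psi> where "\<psi> r = G (y + r *\<^sub>R d) \<bullet> d - m * (norm d)\<^sup>2 * r" for r
  have "\<psi> 0 \<le> \<psi> 1"
  proof (rule DERIV_nonneg_imp_nondecreasing[of 0 1])
    fix r :: real assume r: "0 \<le> r" "r \<le> 1"
    have "(\<psi> has_real_derivative H (y + r *\<^sub>R d) d \<bullet> d - m * (norm d)\<^sup>2 * 1) (at r)"
      unfolding \<psi>_def
      by (intro DERIV_diff DERIV_cmult DERIV_ident has_real_derivative_inner_along_line G on_segment r)
    moreover have "m * (norm d)\<^sup>2 \<le> H (y + r *\<^sub>R d) d \<bullet> d"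
      using H[OF on_segment[OF r]] by (simp add: d_def)
    ultimately show "\<exists>l. (\<psi> has_real_derivative l) (at r) \<and> 0 \<le> l" by force
  qed simp
  then show ?thesis by (simp add: \<psi>_def d_def inner_diff_left)
qed

text \<open>Gronwall for \<open>e\<^sup>2\<^sup>\<sigma>\<^sup>t \<parallel>g t\<parallel>\<^sup>2\<close>, whose derivative is \<open>2 e\<^sup>2\<^sup>\<sigma>\<^sup>t (\<sigma> \<parallel>g\<parallel>\<^sup>2 - g \<bullet> A g) \<le> 0\<close>.\<close>
lemma exponential_decay_of_flow:
  fixes g :: "real \<Rightarrow> 'a::real_inner" and A :: "'a \<Rightarrow> 'a"
  assumes A: "\<And>v. \<sigma> * (norm v)\<^sup>2 \<le> v \<bullet> A v"
    and g: "\<And>t. t \<ge> 0 \<Longrightarrow> (g has_vector_derivative - A (g t)) (at t within {0..})"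
    and t: "t \<ge> 0"
  shows "norm (g t) \<le> norm (g 0) * exp (- \<sigma> * t)"
proof -
  define \<rho> where "\<rho> \<tau> = exp (2 * \<sigma> * \<tau>) * (g \<tau> \<bullet> g \<tau>)" for \<tau>
  have "\<rho> t \<le> \<rho> 0"
  proof (rule DERIV_nonpos_imp_decreasing_open[OF t])
    fix \<tau> :: real assume \<tau>: "0 < \<tau>" "\<tau> < t"
    then have "(g has_derivative (\<lambda>k. k *\<^sub>R - A (g \<tau>))) (at \<tau>)"
      using g[of \<tau>] at_within_interior[of \<tau> "{0..}"] by (simp add: has_vector_derivative_def)
    from has_derivative_inner[OF this this]
    have "((\<lambda>\<tau>. g \<tau> \<bullet> g \<tau>) has_real_derivative - 2 * (g \<tau> \<bullet> A (g \<tau>))) (at \<tau>)"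
      unfolding has_field_derivative_def
      by (rule has_derivative_eq_rhs) (simp add: fun_eq_iff inner_commute)
    moreover have "((\<lambda>\<tau>. exp (2 * \<sigma> * \<tau>)) has_real_derivative exp (2 * \<sigma> * \<tau>) * (2 * \<sigma>)) (at \<tau>)"
      by (auto intro!: derivative_eq_intros)
    ultimately have "(\<rho> has_real_derivative
        exp (2 * \<sigma> * \<tau>) * (2 * \<sigma>) * (g \<tau> \<bullet> g \<tau>) + - 2 * (g \<tau> \<bullet> A (g \<tau>)) * exp (2 * \<sigma> * \<tau>)) (at \<tau>)"
      unfolding \<rho>_def by (rule DERIV_mult[rotated])
    moreover have "2 * exp (2 * \<sigma> * \<tau>) * (\<sigma> * (g \<tau> \<bullet> g \<tau>)) \<le> 2 * exp (2 * \<sigma> * \<tau>) * (g \<tau> \<bullet> A (g \<tau>))"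
      using A[of "g \<tau>"] by (simp add: power2_norm_eq_inner)
    ultimately show "\<exists>y. (\<rho> has_real_derivative y) (at \<tau>) \<and> y \<le> 0"
      by (intro exI conjI) (auto simp: algebra_simps)
  next
    have "continuous_on {0..} g"
      by (auto simp: continuous_on_eq_continuous_within intro: has_vector_derivative_continuous[OF g])
    then have "continuous_on {0..t} g"
      by (rule continuous_on_subset) auto
    then show "continuous_on {0..t} \<rho>"
      unfolding \<rho>_def by (intro continuous_intros)
  qed
  then have "exp (2 * \<sigma> * t) * (norm (g t))\<^sup>2 \<le> (norm (g 0))\<^sup>2"
    by (simp add: \<rho>_def power2_norm_eq_inner)
  moreover have "exp (2 * \<sigma> * t) * (norm (g 0) * exp (- \<sigma> * t))\<^sup>2 = (norm (g 0))\<^sup>2"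
    by (simp add: power_mult_distrib power2_eq_square mult_ac flip: exp_add)
  ultimately have "(norm (g t))\<^sup>2 \<le> (norm (g 0) * exp (- \<sigma> * t))\<^sup>2"
    by (metis exp_gt_zero mult_le_cancel_left_pos)
  then show ?thesis
    by (rule power2_le_imp_le) simp
qed

lemma convex_strict_sublevel:
  assumes "convex_on UNIV g"
  shows "convex {x. g x < b}"
proof (rule convexI)
  fix x y and u v :: real
  assume "x \<in> {x. g x < b}" "y \<in> {x. g x < b}" "0 \<le> u" "0 \<le> v" "u + v = 1"
  moreover from this have "u * g x + v * g y \<le> u * max (g x) (g y) + v * max (g x) (g y)"
    by (intro add_mono mult_left_mono) auto
  moreover have "g (u *\<^sub>R x + v *\<^sub>R y) \<le> u * g x + v * g y"
    using convex_onD[OF assms, of v x y] \<open>u + v = 1\<close> \<open>0 \<le> v\<close> \<open>0 \<le> u\<close>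
    by (simp add: eq_diff_eq[symmetric])
  ultimately show "u *\<^sub>R x + v *\<^sub>R y \<in> {x. g x < b}"
    by (simp add: distrib_right[symmetric])
qed

lemma quadratic_dominates_linear:
  fixes a b m :: real
  assumes m: "m > 0"
  obtains R where "R \<ge> 0" and "\<And>r. R < r \<Longrightarrow> a + b * r < m / 2 * r\<^sup>2"
proof
  define R where "R = max 1 (2 * (\<bar>a\<bar> + \<bar>b\<bar> + 1) / m)"
  show "R \<ge> 0" by (simp add: R_def)
  fix r assume "R < r"
  then have r: "1 < r" and "2 * (\<bar>a\<bar> + \<bar>b\<bar> + 1) / m < r"
    by (auto simp: R_def)
  then have "\<bar>a\<bar> + \<bar>b\<bar> + 1 < m * r / 2"
    using m by (simp add: field_simps)
  then have "(\<bar>a\<bar> + \<bar>b\<bar> + 1) * r < (m * r / 2) * r"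
    using r by (intro mult_strict_right_mono) auto
  moreover have "a \<le> \<bar>a\<bar> * r" and "b * r \<le> \<bar>b\<bar> * r"
    using r mult_left_mono[of 1 r "\<bar>a\<bar>"] by (auto intro: mult_right_mono)
  moreover have "(\<bar>a\<bar> + \<bar>b\<bar> + 1) * r = \<bar>a\<bar> * r + \<bar>b\<bar> * r + r"
    and "(m * r / 2) * r = m / 2 * r\<^sup>2"
    by (simp_all add: algebra_simps power2_eq_square)
  ultimately show "a + b * r < m / 2 * r\<^sup>2"
    using r by linarith
qed

lemma minimum_from_compact_core:
  fixes \<phi> :: "'a::topological_space \<Rightarrow> real"
  assumes "compact E" "E \<subseteq> D" "\<xi> \<in> E" "continuous_on E \<phi>"
    and outside: "\<And>x. x \<in> D \<Longrightarrow> x \<notin> E \<Longrightarrow> \<phi> \<xi> < \<phi> x"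
  shows "\<exists>y\<in>D. \<forall>x\<in>D. \<phi> y \<le> \<phi> x"
proof -
  obtain y where y: "y \<in> E" and min_E: "\<forall>x\<in>E. \<phi> y \<le> \<phi> x"
    using continuous_attains_inf[of E \<phi>] assms by blast
  have "\<phi> y \<le> \<phi> x" if "x \<in> D" for x
  proof (cases "x \<in> E")
    case False
    then show ?thesis using outside[OF that] min_E \<open>\<xi> \<in> E\<close> by fastforce
  qed (use min_E in blast)
  then show ?thesis using y \<open>E \<subseteq> D\<close> by blast
qed

locale barrier =
  fixes f0 :: "real^'n \<Rightarrow> real \<Rightarrow> real"
    and f :: "nat \<Rightarrow> real^'n \<Rightarrow> real \<Rightarrow> real"
    and p :: nat and m :: real
    and c s c' s' :: "real \<Rightarrow> real"
  assumes smooth_f0: "tv_smooth f0"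
    and smooth_f: "\<forall>i\<in>{1..p}. tv_smooth (f i)"
    and m_pos: "m > 0"
    and strongly_convex_f0: "\<forall>t\<ge>0. \<forall>x v. v \<bullet> (xhess (\<lambda>y. f0 y t) x *v v) \<ge> m * (norm v)\<^sup>2"
    and convex_f: "\<forall>i\<in>{1..p}. \<forall>t\<ge>0. convex_on UNIV (\<lambda>x. f i x t)"
    and c_pos: "\<forall>t\<ge>0. c t > 0"
    and c_deriv: "\<forall>t\<ge>0. (c has_real_derivative c' t) (at t within {0..})"
    and s_deriv: "\<forall>t\<ge>0. (s has_real_derivative s' t) (at t within {0..})"
begin

abbreviation "\<Phi> \<equiv> Phi_tilde f0 f p c s"
abbreviation "\<D> \<equiv> D_tilde f p s"
abbreviation "grad0 t \<equiv> xgrad (\<lambda>y. f0 y t)"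
abbreviation "gradf i t \<equiv> xgrad (\<lambda>y. f i y t)"

definition grad_Phi :: "real \<Rightarrow> real^'n \<Rightarrow> real^'n" where
  "grad_Phi t x = grad0 t x + (1 / c t) *\<^sub>R (\<Sum>i=1..p. (1 / (s t - f i x t)) *\<^sub>R gradf i t x)"

definition hess_Phi :: "real \<Rightarrow> real^'n \<Rightarrow> real^'n \<Rightarrow> real^'n" where
  "hess_Phi t x h = xhess (\<lambda>y. f0 y t) x *v h + (1 / c t) *\<^sub>R (\<Sum>i=1..p.
      (1 / (s t - f i x t)) *\<^sub>R (xhess (\<lambda>y. f i y t) x *v h)
      + ((gradf i t x \<bullet> h) / (s t - f i x t)\<^sup>2) *\<^sub>R gradf i t x)"

lemma slack_pos: "x \<in> \<D> t \<Longrightarrow> i \<in> {1..p} \<Longrightarrow> 0 < s t - f i x t"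
  by (auto simp: D_tilde_def)

lemma f_has_derivative:
  "i \<in> {1..p} \<Longrightarrow> t \<ge> 0 \<Longrightarrow> ((\<lambda>y. f i y t) has_derivative (\<lambda>h. gradf i t x \<bullet> h)) (at x)"
  using smooth_f by (intro tv_smooth_has_derivative_xgrad) auto

lemma gradf_has_derivative:
  "i \<in> {1..p} \<Longrightarrow> t \<ge> 0 \<Longrightarrow> (gradf i t has_derivative (\<lambda>h. xhess (\<lambda>y. f i y t) x *v h)) (at x)"
  using smooth_f by (intro tv_smooth_xgrad_has_derivative_xhess) auto

lemma D_eq_Inter: "\<D> t = (\<Inter>i\<in>{1..p}. {x. f i x t < s t})"
  by (auto simp: D_tilde_def)

lemma continuous_on_f: "i \<in> {1..p} \<Longrightarrow> t \<ge> 0 \<Longrightarrow> continuous_on UNIV (\<lambda>x. f i x t)"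
  using f_has_derivative
  by (intro continuous_at_imp_continuous_on) (blast intro: has_derivative_continuous)

lemma open_D: "t \<ge> 0 \<Longrightarrow> open (\<D> t)"
  unfolding D_eq_Inter
  by (intro open_INT ballI open_Collect_less continuous_on_f continuous_on_const) auto

lemma convex_D: "t \<ge> 0 \<Longrightarrow> convex (\<D> t)"
  unfolding D_eq_Inter using convex_f by (intro convex_INT ballI convex_strict_sublevel) auto

lemma Phi_has_derivative:
  assumes t: "t \<ge> 0" and x: "x \<in> \<D> t"
  shows "((\<lambda>y. \<Phi> y t) has_derivative (\<lambda>h. grad_Phi t x \<bullet> h)) (at x)"
proof -
  have "((\<lambda>y. \<Phi> y t) has_derivative
     (\<lambda>h. grad0 t x \<bullet> h - 1 / c t * (\<Sum>i=1..p. (0 - gradf i t x \<bullet> h) * inverse (s t - f i x t)))) (at x)"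
    unfolding Phi_tilde_def
    by (intro derivative_intros tv_smooth_has_derivative_xgrad[OF smooth_f0 t] f_has_derivative t
        DERIV_ln[THEN DERIV_compose_FDERIV] slack_pos[OF x])
  then show ?thesis
    by (rule has_derivative_eq_rhs)
      (simp add: fun_eq_iff grad_Phi_def inner_add_left inner_sum_left sum_distrib_left
         sum_negf[symmetric] divide_inverse mult_ac)
qed

lemma grad_Phi_has_derivative:
  assumes t: "t \<ge> 0" and x: "x \<in> \<D> t"
  shows "(grad_Phi t has_derivative hess_Phi t x) (at x)"
proof -
  have barrier_term: "((\<lambda>y. (1 / (s t - f i y t)) *\<^sub>R gradf i t y) has_derivative
      (\<lambda>h. (1 / (s t - f i x t)) *\<^sub>R (xhess (\<lambda>y. f i y t) x *v h)
      + ((gradf i t x \<bullet> h) / (s t - f i x t)\<^sup>2) *\<^sub>R gradf i t x)) (at x)" if i: "i \<in> {1..p}" for i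
  proof -
    have "((\<lambda>y. s t - f i y t) has_derivative (\<lambda>h. 0 - gradf i t x \<bullet> h)) (at x)"
      by (intro has_derivative_diff has_derivative_const f_has_derivative[OF i t])
    from has_derivative_divide[OF has_derivative_const this, of 1]
    have "((\<lambda>y. 1 / (s t - f i y t)) has_derivative
              (\<lambda>h. (gradf i t x \<bullet> h) / (s t - f i x t)\<^sup>2)) (at x)"
      using slack_pos[OF x i]
      by (rule_tac has_derivative_eq_rhs) (auto simp: fun_eq_iff field_simps power2_eq_square)
    from has_derivative_scaleR[OF this gradf_has_derivative[OF i t]] show ?thesis
      by (simp add: add.commute)
  qed
  show ?thesis
    unfolding grad_Phi_def[abs_def] hess_Phi_def[abs_def]
    by (intro has_derivative_add tv_smooth_xgrad_has_derivative_xhess[OF smooth_f0 t]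
        has_derivative_scaleR_right has_derivative_sum barrier_term) auto
qed

lemma xgrad_Phi: "t \<ge> 0 \<Longrightarrow> x \<in> \<D> t \<Longrightarrow> xgrad (\<lambda>y. \<Phi> y t) x = grad_Phi t x"
  using xgrad_eq[OF Phi_has_derivative] by (simp add: vec_eq_iff inner_axis)

lemma xhess_Phi:
  assumes t: "t \<ge> 0" and x: "x \<in> \<D> t"
  shows "xhess (\<lambda>y. \<Phi> y t) x *v h = hess_Phi t x h"
proof -
  have "(xgrad (\<lambda>y. \<Phi> y t) has_derivative hess_Phi t x) (at x)"
    by (rule has_derivative_transform_within_open[OF grad_Phi_has_derivative[OF t x] open_D[OF t] x])
       (simp add: xgrad_Phi[OF t])
  then show ?thesis by (rule xhess_mult_eq)
qed

text \<open>Each barrier term contributes \<open>(\<nabla>\<^sup>2f\<^sub>i v \<bullet> v)/(s - f\<^sub>i) + (\<nabla>f\<^sub>i \<bullet> v)\<^sup>2/(s - f\<^sub>i)\<^sup>2 \<ge> 0\<close>,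
  so \<open>\<Phi>\<close> inherits the strong convexity modulus of \<open>f\<^sub>0\<close>.\<close>
lemma hess_Phi_coercive:
  assumes t: "t \<ge> 0" and x: "x \<in> \<D> t"
  shows "m * (norm v)\<^sup>2 \<le> v \<bullet> hess_Phi t x v"
proof -
  have "0 \<le> (1 / (s t - f i x t)) * (v \<bullet> (xhess (\<lambda>y. f i y t) x *v v))
           + ((gradf i t x \<bullet> v) / (s t - f i x t)\<^sup>2) * (gradf i t x \<bullet> v)" if i: "i \<in> {1..p}" for i
  proof -
    have "0 \<le> (xhess (\<lambda>y. f i y t) x *v v) \<bullet> v"
      using convex_f i t
      by (intro convex_hessian_nonneg[where g="\<lambda>y. f i y t" and G="gradf i t" and x=x]
          f_has_derivative gradf_has_derivative) auto
    then have "0 \<le> (1 / (s t - f i x t)) * (v \<bullet> (xhess (\<lambda>y. f i y t) x *v v))"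
      using slack_pos[OF x i] by (simp add: inner_commute)
    moreover have "((gradf i t x \<bullet> v) / (s t - f i x t)\<^sup>2) * (gradf i t x \<bullet> v)
        = (gradf i t x \<bullet> v)\<^sup>2 / (s t - f i x t)\<^sup>2"
      by (simp add: power2_eq_square)
    ultimately show ?thesis by simp
  qed
  then have "0 \<le> (1 / c t) * (\<Sum>i=1..p. (1 / (s t - f i x t)) * (v \<bullet> (xhess (\<lambda>y. f i y t) x *v v))
           + ((gradf i t x \<bullet> v) / (s t - f i x t)\<^sup>2) * (gradf i t x \<bullet> v))"
    using c_pos t by (intro mult_nonneg_nonneg sum_nonneg) auto
  moreover have "m * (norm v)\<^sup>2 \<le> v \<bullet> (xhess (\<lambda>y. f0 y t) x *v v)"
    using strongly_convex_f0 t by auto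
  ultimately show ?thesis
    by (simp add: hess_Phi_def inner_add_right inner_sum_right inner_commute[of v "gradf _ _ _"])
qed

lemma xhess_Phi_right_inverse:
  assumes t: "t \<ge> 0" and x: "x \<in> \<D> t"
  shows "xhess (\<lambda>y. \<Phi> y t) x *v (matrix_inv (xhess (\<lambda>y. \<Phi> y t) x) *v w) = w"
proof -
  let ?H = "xhess (\<lambda>y. \<Phi> y t) x"
  have "v = 0" if "?H *v v = 0" for v
    using hess_Phi_coercive[OF t x, of v] xhess_Phi[OF t x, of v] that m_pos
    by (simp add: mult_le_0_iff)
  then have "invertible ?H"
    by (simp add: invertible_left_inverse matrix_left_invertible_ker)
  then have "?H ** matrix_inv ?H = mat 1"
    unfolding matrix_inv_def invertible_def by (rule someI2_ex) blast
  then show ?thesis by (simp add: matrix_vector_mul_assoc)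
qed

lemma grad_Phi_differentiable_space_time:
  assumes t: "t \<ge> 0" and x: "x \<in> \<D> t"
  shows "(\<lambda>w. grad_Phi (snd w) (fst w)) differentiable (at (x, t) within UNIV \<times> {0..})"
proof -
  have "(\<lambda>w. gradf i (snd w) (fst w)) differentiable (at (x, t) within UNIV \<times> {0..})"
    and "(\<lambda>w. f i (fst w) (snd w)) differentiable (at (x, t) within UNIV \<times> {0..})"
    if "i \<in> {1..p}" for i
    using tv_smooth_has_derivative_space_time[of "f i" t x] smooth_f that t
    by (auto intro: differentiableI)
  moreover have "(\<lambda>w. grad0 (snd w) (fst w)) differentiable (at (x, t) within UNIV \<times> {0..})"
    using tv_smooth_has_derivative_space_time(2)[OF smooth_f0 t] by (rule differentiableI)
  moreover have "(\<lambda>w. c (snd w)) differentiable (at (x, t) within UNIV \<times> {0..})"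
    and "(\<lambda>w. s (snd w)) differentiable (at (x, t) within UNIV \<times> {0..})"
    using c_deriv s_deriv t unfolding has_field_derivative_def
    by (blast intro: differentiable_time_only differentiableI)+
  moreover have "c t \<noteq> 0" using c_pos t by force
  moreover have "s t - f i x t \<noteq> 0" if "i \<in> {1..p}" for i
    using slack_pos[OF x that] by simp
  ultimately show ?thesis
    unfolding grad_Phi_def by simp
qed

lemma eventually_in_D:
  assumes t: "t \<ge> 0" and x: "x \<in> \<D> t"
  shows "eventually (\<lambda>\<tau>. \<tau> \<in> {0..} \<longrightarrow> x \<in> \<D> \<tau>) (nhds t)"
proof -
  have "eventually (\<lambda>\<tau>. 0 < s \<tau> - f i x \<tau>) (at t within {0..})" if i: "i \<in> {1..p}" for i
  proof (rule order_tendstoD)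
    have "continuous (at t within {0..}) s"
      using s_deriv t by (auto intro: DERIV_continuous)
    moreover have "continuous (at t within {0..}) (\<lambda>\<tau>. f i x \<tau>)"
      using smooth_f i t by (auto simp: tv_smooth_def intro: differentiable_imp_continuous_within)
    ultimately show "((\<lambda>\<tau>. s \<tau> - f i x \<tau>) \<longlongrightarrow> s t - f i x t) (at t within {0..})"
      by (intro tendsto_diff) (simp_all add: continuous_within)
  qed (use slack_pos[OF x i] in simp)
  then have "eventually (\<lambda>\<tau>. \<forall>i\<in>{1..p}. 0 < s \<tau> - f i x \<tau>) (at t within {0..})"
    by (intro eventually_ball_finite) auto
  then show ?thesis
    unfolding eventually_at_filter by (rule eventually_mono) (use x in \<open>auto simp: D_tilde_def\<close>)
qed

text \<open>The partial derivatives of \<open>\<nabla>\<^sub>x \<Phi>\<close> are read off its joint derivative \<open>DG\<close> on \<open>\<real>\<^sup>n \<times> [0,\<infinity>)\<close>;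
  for \<open>\<nabla>\<^sub>x\<^sub>t \<Phi>\<close> this needs \<open>\<nabla>\<^sub>x \<Phi> = grad_Phi\<close> near \<open>(x, t)\<close>, which holds since \<open>\<D>\<close> is open in time.\<close>
lemma partials_of_grad_Phi:
  assumes t: "t \<ge> 0" and x: "x \<in> \<D> t"
    and DG: "((\<lambda>w. grad_Phi (snd w) (fst w)) has_derivative DG) (at (x, t) within UNIV \<times> {0..})"
  shows "grad_xt \<Phi> x t = DG (0, 1)"
    and "hess_Phi t x h = DG (h, 0)"
proof -
  have lin: "linear DG" using DG has_derivative_linear by blast
  have time_line: "((\<lambda>\<tau>. (x, \<tau>)) has_derivative (\<lambda>k. (0, k))) (at t within {0..})"
    by (rule has_derivative_Pair[OF has_derivative_const has_derivative_ident])
  have "((\<lambda>\<tau>. grad_Phi (snd (x, \<tau>)) (fst (x, \<tau>))) has_derivative (\<lambda>k. DG (0, k))) (at t within {0..})"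
    by (rule has_derivative_in_compose[OF time_line has_derivative_subset[OF DG]]) auto
  moreover have "(\<lambda>k. DG (0, k)) = (\<lambda>k. k *\<^sub>R DG (0, 1))"
  proof
    show "DG (0, k) = k *\<^sub>R DG (0, 1)" for k
      using linear_scale[OF lin, of k "(0, 1)"] by simp
  qed
  ultimately have time: "((\<lambda>\<tau>. grad_Phi \<tau> x) has_vector_derivative DG (0, 1)) (at t within {0..})"
    by (simp add: has_vector_derivative_def)
  have "grad_xt \<Phi> x t = vector_derivative (\<lambda>\<tau>. grad_Phi \<tau> x) (at t within {0..})"
    unfolding grad_xt_def
  proof (rule vector_derivative_cong_eq)
    show "eventually (\<lambda>\<tau>. \<tau> \<in> {0..} \<longrightarrow> xgrad (\<lambda>y. \<Phi> y \<tau>) x = grad_Phi \<tau> x) (nhds t)"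
      using eventually_in_D[OF t x] by (rule eventually_mono) (simp add: xgrad_Phi)
  qed (use t in simp_all)
  also have "\<dots> = DG (0, 1)"
    using time by (rule vector_derivative_within[OF at_within_atLeast_neq_bot[OF t]])
  finally show "grad_xt \<Phi> x t = DG (0, 1)" .
  have space_line: "((\<lambda>y. (y, t)) has_derivative (\<lambda>h. (h, 0))) (at x)"
    by (rule has_derivative_Pair[OF has_derivative_ident has_derivative_const])
  have "((\<lambda>y. grad_Phi (snd (y, t)) (fst (y, t))) has_derivative (\<lambda>h. DG (h, 0))) (at x within UNIV)"
    by (rule has_derivative_in_compose[OF space_line has_derivative_subset[OF DG]]) (use t in auto)
  then have "hess_Phi t x = (\<lambda>h. DG (h, 0))"
    by (intro has_derivative_unique[OF grad_Phi_has_derivative[OF t x]]) simp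
  then show "hess_Phi t x h = DG (h, 0)" by simp
qed

text \<open>Along a solution of the flow, \<open>\<nabla>\<^sub>x\<^sub>x \<Phi> \<dot>z\<close> cancels the Newton preconditioner and
  \<open>\<nabla>\<^sub>x\<^sub>t \<Phi>\<close> cancels the drift, leaving \<open>d/dt \<nabla>\<^sub>x \<Phi>(z t, t) = - P \<nabla>\<^sub>x \<Phi>(z t, t)\<close>.\<close>
lemma grad_Phi_along_flow:
  fixes P :: "real^'n^'n" and z :: "real \<Rightarrow> real^'n"
  assumes t: "t \<ge> 0" and zt: "z t \<in> \<D> t"
    and z': "(z has_vector_derivative
       - (matrix_inv (xhess (\<lambda>y. \<Phi> y t) (z t)) *v
          (P *v xgrad (\<lambda>y. \<Phi> y t) (z t) + grad_xt \<Phi> (z t) t))) (at t within {0..})"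
  shows "((\<lambda>\<tau>. grad_Phi \<tau> (z \<tau>)) has_vector_derivative - (P *v grad_Phi t (z t))) (at t within {0..})"
proof -
  obtain DG where DG: "((\<lambda>w. grad_Phi (snd w) (fst w)) has_derivative DG) (at (z t, t) within UNIV \<times> {0..})"
    using grad_Phi_differentiable_space_time[OF t zt] by (auto simp: differentiable_def)
  have lin: "linear DG" using DG has_derivative_linear by blast
  define v where "v = - (matrix_inv (xhess (\<lambda>y. \<Phi> y t) (z t)) *v
                     (P *v xgrad (\<lambda>y. \<Phi> y t) (z t) + grad_xt \<Phi> (z t) t))"
  have path: "((\<lambda>\<tau>. (z \<tau>, \<tau>)) has_derivative (\<lambda>k. (k *\<^sub>R v, k))) (at t within {0..})"
    using z' by (intro has_derivative_Pair has_derivative_ident) (simp add: v_def has_vector_derivative_def)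
  have "((\<lambda>\<tau>. grad_Phi (snd (z \<tau>, \<tau>)) (fst (z \<tau>, \<tau>))) has_derivative (\<lambda>k. DG (k *\<^sub>R v, k)))
      (at t within {0..})"
    by (rule has_derivative_in_compose[OF path has_derivative_subset[OF DG]]) auto
  moreover have "(\<lambda>k. DG (k *\<^sub>R v, k)) = (\<lambda>k. k *\<^sub>R DG (v, 1))"
  proof
    show "DG (k *\<^sub>R v, k) = k *\<^sub>R DG (v, 1)" for k
      using linear_scale[OF lin, of k "(v, 1)"] by simp
  qed
  moreover have "DG (v, 1) = DG (v, 0) + DG (0, 1)"
    using linear_add[OF lin, of "(v, 0)" "(0, 1)"] by simp
  moreover have "DG (v, 0) = - (P *v grad_Phi t (z t) + DG (0, 1))"
  proof -
    have "DG (v, 0) = xhess (\<lambda>y. \<Phi> y t) (z t) *v v"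
      using partials_of_grad_Phi(2)[OF t zt DG, of v] xhess_Phi[OF t zt, of v] by simp
    also have "\<dots> = - (P *v xgrad (\<lambda>y. \<Phi> y t) (z t) + grad_xt \<Phi> (z t) t)"
      unfolding v_def linear_neg[OF matrix_vector_mul_linear] xhess_Phi_right_inverse[OF t zt] ..
    finally show ?thesis
      using xgrad_Phi[OF t zt] partials_of_grad_Phi(1)[OF t zt DG] by simp
  qed
  ultimately show ?thesis
    by (simp add: has_vector_derivative_def)
qed

lemma f0_quadratic_lower_bound:
  assumes t: "t \<ge> 0"
  shows "f0 \<xi> t - norm (grad0 t \<xi>) * norm (y - \<xi>) + m / 2 * (norm (y - \<xi>))\<^sup>2 \<le> f0 y t"
proof -
  have "f0 \<xi> t + grad0 t \<xi> \<bullet> (y - \<xi>) + m / 2 * (norm (y - \<xi>))\<^sup>2 \<le> f0 (\<xi> + (y - \<xi>)) t"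
  proof (rule strongly_convex_above_tangent[where L="\<lambda>u h. xhess (\<lambda>y. f0 y t) u *v h"])
    show "((\<lambda>y. f0 y t) has_derivative (\<lambda>h. grad0 t u \<bullet> h)) (at u)" for u
      by (rule tv_smooth_has_derivative_xgrad[OF smooth_f0 t])
    show "(grad0 t has_derivative (\<lambda>h. xhess (\<lambda>y. f0 y t) u *v h)) (at u)" for u
      by (rule tv_smooth_xgrad_has_derivative_xhess[OF smooth_f0 t])
    show "m * (norm (y - \<xi>))\<^sup>2 \<le> (xhess (\<lambda>y. f0 y t) u *v (y - \<xi>)) \<bullet> (y - \<xi>)" for u
      using strongly_convex_f0 t by (simp add: inner_commute)
  qed
  moreover have "- (norm (grad0 t \<xi>) * norm (y - \<xi>)) \<le> grad0 t \<xi> \<bullet> (y - \<xi>)"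
    using Cauchy_Schwarz_ineq2[of "grad0 t \<xi>" "y - \<xi>"] by (simp add: abs_le_iff)
  ultimately show ?thesis by simp
qed

lemma ln_slack_le:
  assumes t: "t \<ge> 0" and y: "y \<in> \<D> t" and i: "i \<in> {1..p}"
  shows "ln (s t - f i y t) \<le> (s t - f i \<xi> t) + norm (gradf i t \<xi>) * norm (y - \<xi>)"
proof -
  have "f i \<xi> t + gradf i t \<xi> \<bullet> (y - \<xi>) \<le> f i y t"
    using convex_f i t by (intro convex_above_tangent f_has_derivative) auto
  moreover have "ln (s t - f i y t) \<le> s t - f i y t - 1"
    using slack_pos[OF y i] by (intro ln_le_minus_one) simp
  moreover have "- (gradf i t \<xi> \<bullet> (y - \<xi>)) \<le> norm (gradf i t \<xi>) * norm (y - \<xi>)"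
    using Cauchy_Schwarz_ineq2[of "gradf i t \<xi>" "y - \<xi>"] by (simp add: abs_le_iff)
  ultimately show ?thesis by linarith
qed

lemma Phi_coercive:
  assumes t: "t \<ge> 0"
  obtains R where "R \<ge> 0" and "\<And>y. y \<in> \<D> t \<Longrightarrow> R < norm (y - \<xi>) \<Longrightarrow> \<Phi> \<xi> t < \<Phi> y t"
proof -
  define K where "K = 1 / c t"
  have K: "K > 0" using c_pos t by (simp add: K_def)
  define a where "a = \<Phi> \<xi> t - f0 \<xi> t + K * (\<Sum>i=1..p. s t - f i \<xi> t)"
  define b where "b = norm (grad0 t \<xi>) + K * (\<Sum>i=1..p. norm (gradf i t \<xi>))"
  obtain R where R: "R \<ge> 0" and dom: "\<And>r. R < r \<Longrightarrow> a + b * r < m / 2 * r\<^sup>2"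
    using quadratic_dominates_linear[OF m_pos, of a b] by blast
  show ?thesis
  proof (rule that[OF R])
    fix y assume y: "y \<in> \<D> t" and far: "R < norm (y - \<xi>)"
    have "(\<Sum>i=1..p. ln (s t - f i y t))
        \<le> (\<Sum>i=1..p. (s t - f i \<xi> t) + norm (gradf i t \<xi>) * norm (y - \<xi>))"
      by (intro sum_mono ln_slack_le[OF t y]) auto
    also have "\<dots> = (\<Sum>i=1..p. s t - f i \<xi> t) + (\<Sum>i=1..p. norm (gradf i t \<xi>)) * norm (y - \<xi>)"
      by (simp add: sum.distrib sum_distrib_right)
    finally have "K * (\<Sum>i=1..p. ln (s t - f i y t))
        \<le> K * ((\<Sum>i=1..p. s t - f i \<xi> t) + (\<Sum>i=1..p. norm (gradf i t \<xi>)) * norm (y - \<xi>))"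
      using K by (intro mult_left_mono) auto
    moreover have "\<Phi> y t = f0 y t - K * (\<Sum>i=1..p. ln (s t - f i y t))"
      by (simp add: Phi_tilde_def K_def)
    ultimately show "\<Phi> \<xi> t < \<Phi> y t"
      using f0_quadratic_lower_bound[OF t, of \<xi> y] dom[OF far]
      by (simp add: a_def b_def algebra_simps)
  qed
qed

text \<open>Near the boundary of \<open>\<D> t\<close> one logarithm tends to \<open>-\<infinity>\<close> while, on a bounded set, the other
  terms of \<open>\<Phi>\<close> are bounded below; \<open>\<delta>\<close> is chosen so that the first dominates.\<close>
lemma Phi_barrier:
  assumes t: "t \<ge> 0" and R: "R \<ge> 0"
  obtains \<delta> where "\<delta> > 0"
    and "\<And>y j. y \<in> \<D> t \<Longrightarrow> norm (y - \<xi>) \<le> R \<Longrightarrow> j \<in> {1..p} \<Longrightarrow> s t - f j y t < \<delta> \<Longrightarrow>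
           \<Phi> \<xi> t < \<Phi> y t"
proof -
  define K where "K = 1 / c t"
  have K: "K > 0" using c_pos t by (simp add: K_def)
  define M where "M = (\<Sum>i=1..p. \<bar>s t - f i \<xi> t\<bar> + norm (gradf i t \<xi>) * R)"
  define L where "L = \<bar>\<Phi> \<xi> t - f0 \<xi> t + norm (grad0 t \<xi>) * R + K * M\<bar> / K + 1"
  show ?thesis
  proof (rule that[of "exp (- L)"])
    fix y j assume y: "y \<in> \<D> t" and near: "norm (y - \<xi>) \<le> R" and j: "j \<in> {1..p}"
      and slack: "s t - f j y t < exp (- L)"
    have "ln (s t - f j y t) < ln (exp (- L))"
      using slack slack_pos[OF y j] by (subst ln_less_cancel_iff) auto
    then have ln_j: "ln (s t - f j y t) < - L" by simp
    have "ln (s t - f i y t) \<le> \<bar>s t - f i \<xi> t\<bar> + norm (gradf i t \<xi>) * R"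
      if i: "i \<in> {1..p}" for i
      using ln_slack_le[OF t y i, of \<xi>] mult_left_mono[OF near norm_ge_zero, of "gradf i t \<xi>"]
      by linarith
    then have "(\<Sum>i\<in>{1..p} - {j}. ln (s t - f i y t))
        \<le> (\<Sum>i\<in>{1..p} - {j}. \<bar>s t - f i \<xi> t\<bar> + norm (gradf i t \<xi>) * R)"
      by (intro sum_mono) auto
    also have "\<dots> \<le> M"
      unfolding M_def using R by (intro sum_mono2) auto
    finally have "(\<Sum>i=1..p. ln (s t - f i y t)) < M - L"
      using ln_j j by (simp add: sum.remove)
    from mult_strict_left_mono[OF this K]
    have "K * (\<Sum>i=1..p. ln (s t - f i y t)) < K * M - K * L"
      by (simp add: right_diff_distrib)
    moreover have "f0 \<xi> t - norm (grad0 t \<xi>) * R \<le> f0 y t"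
    proof -
      have "norm (grad0 t \<xi>) * norm (y - \<xi>) \<le> norm (grad0 t \<xi>) * R"
        using near by (intro mult_left_mono) auto
      moreover have "0 \<le> m / 2 * (norm (y - \<xi>))\<^sup>2" using m_pos by simp
      ultimately show ?thesis using f0_quadratic_lower_bound[OF t, of \<xi> y] by linarith
    qed
    moreover have "\<Phi> \<xi> t - f0 \<xi> t + norm (grad0 t \<xi>) * R + K * M < K * L"
    proof -
      have "K * L = \<bar>\<Phi> \<xi> t - f0 \<xi> t + norm (grad0 t \<xi>) * R + K * M\<bar> + K"
        using K by (simp add: L_def distrib_left)
      then show ?thesis using K by linarith
    qed
    moreover have "\<Phi> y t = f0 y t - K * (\<Sum>i=1..p. ln (s t - f i y t))"
      by (simp add: Phi_tilde_def K_def)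
    ultimately show "\<Phi> \<xi> t < \<Phi> y t" by linarith
  qed simp
qed

lemma Phi_has_minimiser:
  assumes t: "t \<ge> 0" and \<xi>: "\<xi> \<in> \<D> t"
  shows "\<exists>y\<in>\<D> t. \<forall>x\<in>\<D> t. \<Phi> y t \<le> \<Phi> x t"
proof -
  obtain R where R: "R \<ge> 0" and far: "\<And>y. y \<in> \<D> t \<Longrightarrow> R < norm (y - \<xi>) \<Longrightarrow> \<Phi> \<xi> t < \<Phi> y t"
    using Phi_coercive[OF t, where \<xi>=\<xi>] by blast
  obtain \<delta> where \<delta>: "\<delta> > 0" and near: "\<And>y j. y \<in> \<D> t \<Longrightarrow> norm (y - \<xi>) \<le> R \<Longrightarrow> j \<in> {1..p} \<Longrightarrow>
      s t - f j y t < \<delta> \<Longrightarrow> \<Phi> \<xi> t < \<Phi> y t"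
    using Phi_barrier[OF t R, where \<xi>=\<xi>] by blast
  define E where "E = cball \<xi> R \<inter> (\<Inter>i\<in>{1..p}. {y. f i y t \<le> s t - \<delta>})"
  show ?thesis
  proof (rule minimum_from_compact_core[of E])
    show "compact E"
      unfolding E_def
      by (intro compact_Int_closed compact_cball closed_INT ballI closed_Collect_le continuous_on_f
          continuous_on_const t) auto
    show "E \<subseteq> \<D> t"
      using \<delta> by (fastforce simp: E_def D_tilde_def)
    show "\<xi> \<in> E"
      using near[OF \<xi>] R \<delta> by (force simp: E_def)
    show "continuous_on E (\<lambda>y. \<Phi> y t)"
      using \<open>E \<subseteq> \<D> t\<close> Phi_has_derivative[OF t]
      by (intro continuous_at_imp_continuous_on) (blast intro: has_derivative_continuous)
    show "\<Phi> \<xi> t < \<Phi> x t" if "x \<in> \<D> t" "x \<notin> E" for x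
    proof (cases "norm (x - \<xi>) \<le> R")
      case True
      with that obtain i where "i \<in> {1..p}" and "s t - f i x t < \<delta>"
        by (force simp: E_def dist_norm norm_minus_commute)
      with True show ?thesis using near[OF \<open>x \<in> \<D> t\<close>] by blast
    qed (use far[OF \<open>x \<in> \<D> t\<close>] in simp)
  qed
qed

lemma z_star_minimises:
  assumes t: "t \<ge> 0" and \<xi>: "\<xi> \<in> \<D> t"
  shows "z_star f0 f p c s t \<in> \<D> t"
    and "\<forall>x\<in>\<D> t. \<Phi> (z_star f0 f p c s t) t \<le> \<Phi> x t"
proof -
  obtain y where "y \<in> \<D> t" "\<forall>x\<in>\<D> t. \<Phi> y t \<le> \<Phi> x t"
    using Phi_has_minimiser[OF t \<xi>] by blast
  then have "z_star f0 f p c s t \<in> \<D> t \<and> (\<forall>x\<in>\<D> t. \<Phi> (z_star f0 f p c s t) t \<le> \<Phi> x t)"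
    unfolding z_star_def arg_min_on_def
    by (rule_tac arg_minI[of _ y]) (auto simp: not_less)
  then show "z_star f0 f p c s t \<in> \<D> t" and "\<forall>x\<in>\<D> t. \<Phi> (z_star f0 f p c s t) t \<le> \<Phi> x t"
    by auto
qed

lemma norm_diff_z_star_le:
  assumes t: "t \<ge> 0" and x: "x \<in> \<D> t"
  shows "norm (x - z_star f0 f p c s t) \<le> norm (grad_Phi t x) / m"
proof -
  define y where "y = z_star f0 f p c s t"
  have y: "y \<in> \<D> t" and min: "\<forall>x\<in>\<D> t. \<Phi> y t \<le> \<Phi> x t"
    using z_star_minimises[OF t x] by (simp_all add: y_def)
  have "(\<lambda>h. grad_Phi t y \<bullet> h) = (\<lambda>h. 0)"
    using min by (intro differential_zero_maxmin[OF y open_D[OF t] Phi_has_derivative[OF t y]]) blast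
  then have "grad_Phi t y = 0"
    by (metis inner_eq_zero_iff)
  then have "m * (norm (x - y))\<^sup>2 \<le> grad_Phi t x \<bullet> (x - y)"
    using strongly_monotone_on_convex[OF convex_D[OF t] x y grad_Phi_has_derivative[OF t]]
      hess_Phi_coercive[OF t] by (simp add: inner_commute)
  also have "\<dots> \<le> norm (grad_Phi t x) * norm (x - y)"
    by (rule norm_cauchy_schwarz)
  finally have "m * norm (x - y) \<le> norm (grad_Phi t x) \<or> x = y"
    by (auto simp: power2_eq_square)
  then show ?thesis
    using m_pos by (auto simp: y_def field_simps)
qed

end

theorem lemma5:
  fixes f0 :: "real^'n \<Rightarrow> real \<Rightarrow> real"
    and f :: "nat \<Rightarrow> real^'n \<Rightarrow> real \<Rightarrow> real"
    and p :: nat and m :: real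
    and c s c' s' :: "real \<Rightarrow> real"
    and c0 s0 \<epsilon> \<sigma> :: real
    and x0 :: "real^'n"
    and P :: "real^'n^'n"
    and z :: "real \<Rightarrow> real^'n"
  assumes p_pos: "p \<ge> 1"
    and A1_f0: "tv_smooth f0"
    and A1_fi: "\<forall>i\<in>{1..p}. tv_smooth (f i)"
    and A1_m: "m > 0"
    and A1_strong: "\<forall>t\<ge>0. \<forall>x v. v \<bullet> (xhess (\<lambda>y. f0 y t) x *v v) \<ge> m * (norm v)\<^sup>2"
    and A1_convex: "\<forall>i\<in>{1..p}. \<forall>t\<ge>0. convex_on UNIV (\<lambda>x. f i x t)"
    and c_pos: "\<forall>t\<ge>0. c t > 0"
    and c_deriv: "\<forall>t\<ge>0. (c has_real_derivative c' t) (at t within {0..})"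
    and c'_cont: "continuous_on {0..} c'"
    and s_nonneg: "\<forall>t\<ge>0. s t \<ge> 0"
    and s_deriv: "\<forall>t\<ge>0. (s has_real_derivative s' t) (at t within {0..})"
    and s'_cont: "continuous_on {0..} s'"
    and c0_def: "c 0 = c0"
    and s0_def: "s 0 = s0"
    and eps_pos: "\<epsilon> > 0"
    and s0_choice: "s0 = (if Max ((\<lambda>i. f i x0 0) ` {1..p}) \<le> 0 then 0
                          else Max ((\<lambda>i. f i x0 0) ` {1..p}) + \<epsilon>)"
    and P_sym: "transpose P = P"
    and P_pd: "\<forall>v. v \<noteq> 0 \<longrightarrow> v \<bullet> (P *v v) > 0"
    and sigma_pos: "\<sigma> > 0"
    and P_ge: "\<forall>v. v \<bullet> (P *v v) \<ge> \<sigma> * (norm v)\<^sup>2"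
    and z_ode: "\<forall>t\<ge>0. (z has_vector_derivative
                 (- (matrix_inv (xhess (\<lambda>y. Phi_tilde f0 f p c s y t) (z t)) *v
                     (P *v xgrad (\<lambda>y. Phi_tilde f0 f p c s y t) (z t)
                      + grad_xt (Phi_tilde f0 f p c s) (z t) t))))
               (at t within {0..})"
    and z_init: "z 0 = x0"
    and z_dom: "\<forall>t\<ge>0. z t \<in> D_tilde f p s t"
  shows "\<exists>C\<ge>0. \<forall>t\<ge>0. norm (z t - z_star f0 f p c s t) \<le> C * exp (- \<sigma> * t)"
proof -
  interpret barrier f0 f p m c s c' s'
    using A1_f0 A1_fi A1_m A1_strong A1_convex c_pos c_deriv s_deriv by unfold_locales
  define g where "g t = grad_Phi t (z t)" for t
  have decay: "norm (g t) \<le> norm (g 0) * exp (- \<sigma> * t)" if "t \<ge> 0" for t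
    using P_ge z_ode z_dom grad_Phi_along_flow that unfolding g_def
    by (intro exponential_decay_of_flow[where A="(*v) P"]) auto
  show ?thesis
  proof (intro exI conjI allI impI)
    show "norm (g 0) / m \<ge> 0" using A1_m by simp
    fix t :: real assume t: "t \<ge> 0"
    have "norm (z t - z_star f0 f p c s t) \<le> norm (g t) / m"
      using norm_diff_z_star_le[OF t] z_dom t by (simp add: g_def)
    also have "\<dots> \<le> norm (g 0) / m * exp (- \<sigma> * t)"
      using decay[OF t] A1_m by (simp add: divide_right_mono)
    finally show "norm (z t - z_star f0 f p c s t) \<le> norm (g 0) / m * exp (- \<sigma> * t)" .
  qed
qed

end
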